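(* For $d\in(0,2]$ let $M(4,d)$ be the cardinality of the four-dimensional spherical code by Hopf foliations (SCHF) with minimum distance $d$, as defined in the context. Then the asymptotic center density of this family, $$\overline{\Delta}_c(\mathrm{SCHF}[4])=\lim_{d\to0}\frac{M(4,d)}{\mathbb{S}_4}\left(\frac d2\right)^{3},$$ equals $\dfrac{1}{4\sqrt3}$.
   Context: $\mathbb{S}_n=\frac{n\pi^{n/2}}{\Gamma(1+n/2)}$ is the surface area of the unit sphere $S^{n-1}\subset\mathbb{R}^n$ (so $\mathbb{S}_4=2\pi^2$). Four-dimensional SCHF: given $d\in(0,2]$, put $\Delta\eta=2\arcsin(d/2)$, $t=t(d)=\lfloor\pi/(4\arcsin(d/2))\rfloor$ and $\eta_i=\pi/4+i\Delta\eta$ for $i=0,1,\dots,\lfloor t/2\rfloor$. For $\eta\in(0,\pi/2]$ let $m(d,\eta)=\lfloor\pi/\arcsin(d/(2\cos\eta))\rfloor$ if $d\le2\cos\eta$ and $1$ otherwise; let $n(d,\eta)=\max(2\lfloor\min\{n_1,n_2\}/2\rfloor,1)$ with $n_1=\lfloor\pi/\arcsin[((d^2/4)\csc^2\eta-\cot^2\eta\sin^2(\pi/2m))^{1/2}]\rfloor$ (where $m=m(d,\eta)$), and $n_2=\lfloor2\pi/\arcsin(d/(2\sin\eta))\rfloor$ if $d\le 2\sin\eta$, $n_2=1$ otherwise. On the torus $T_{\eta_i}=S^1_{\cos\eta_i}\times S^1_{\sin\eta_i}\subset S^3$ the code consists of the $m_in_i$ points $(e^{\mathbf{i}(2\pi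 j/m_i+\pi k/m_i)}\cos\eta_i,\ e^{\mathbf{i}2\pi k/n_i}\sin\eta_i)\in\mathbb{C}^2\cong\mathbb{R}^4$, $0\le j<m_i$, $0\le k<n_i$, where $m_i=m(d,\eta_i)$, $n_i=n(d,\eta_i)$; the tori $\eta=\pi/4-i\Delta\eta$, $i\ge1$, carry the points obtained by swapping the two complex coordinates. Thus $M(4,d)=m_0n_0+2\sum_{i=1}^{\lfloor t/2\rfloor}m_in_i$. *)

theory Defs
  imports "HOL-Analysis.Analysis"
begin

definition sphere_area :: "nat \<Rightarrow> real" where
  "sphere_area n = real n * pi powr (real n / 2) / Gamma (1 + real n / 2)"

text \<open>Number of points per circle of radius cos eta (first factor).\<close>
definition schf_m :: "real \<Rightarrow> real \<Rightarrow> int" where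
  "schf_m d \<eta> = (if d \<le> 2 * cos \<eta> then \<lfloor>pi / arcsin (d / (2 * cos \<eta>))\<rfloor> else 1)"

definition schf_n1 :: "real \<Rightarrow> real \<Rightarrow> int" where
  "schf_n1 d \<eta> =
     \<lfloor>pi / arcsin (sqrt ((d^2 / 4) * (1 / sin \<eta>)^2
        - (cos \<eta> / sin \<eta>)^2 * (sin (pi / (2 * real_of_int (schf_m d \<eta>))))^2))\<rfloor>"

definition schf_n2 :: "real \<Rightarrow> real \<Rightarrow> int" where
  "schf_n2 d \<eta> = (if d \<le> 2 * sin \<eta> then \<lfloor>2 * pi / arcsin (d / (2 * sin \<eta>))\<rfloor> else 1)"

definition schf_n :: "real \<Rightarrow> real \<Rightarrow> int" where
  "schf_n d \<eta> = max (2 * (min (schf_n1 d \<eta>) (schf_n2 d \<eta>) div 2)) 1"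

definition schf_t :: "real \<Rightarrow> int" where
  "schf_t d = \<lfloor>pi / (4 * arcsin (d / 2))\<rfloor>"

definition schf_eta :: "real \<Rightarrow> nat \<Rightarrow> real" where
  "schf_eta d i = pi / 4 + real i * (2 * arcsin (d / 2))"

definition schf_M4 :: "real \<Rightarrow> int" where
  "schf_M4 d =
     schf_m d (schf_eta d 0) * schf_n d (schf_eta d 0)
     + 2 * (\<Sum>i\<in>{1..nat (schf_t d div 2)}. schf_m d (schf_eta d i) * schf_n d (schf_eta d i))"

end

theory Submission
  imports Defs
begin

(* Writing x = d / (2 cos eta) and v = d / (2 sin eta), the counts on the torus T_eta are
   functions of x and v alone, with x m -> pi and v n -> 2 pi / sqrt 3 as x, v -> 0 (the
   n_1 constraint wins, since sin (pi / 2m) / x -> 1/2).  Hence m n d^2 -> (8 pi^2 / sqrt 3)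
   sin eta cos eta uniformly on [pi/4, pi/2]; the thin tori with small cos eta, where this
   asymptotics fails, carry only O((cos eta + d) / d^2) points.  As sin eta_i cos eta_i =
   cos (2 i Delta eta) / 2, the main terms of M(4,d) d^3 add up to a Dirichlet kernel,
   d sin ((2 K + 1) Delta eta) / sin Delta eta -> 1 because (2 K + 1) Delta eta -> pi/2 and
   sin Delta eta ~ d.  So M(4,d) d^3 -> 4 pi^2 / sqrt 3, and S_4 2^3 = 16 pi^2. *)

lemma le_arcsin: "0 \<le> x \<Longrightarrow> x \<le> 1 \<Longrightarrow> x \<le> arcsin x"
  using sin_x_le_x[of "arcsin x"] by (simp add: arcsin_nonneg)

lemma floor_div_arcsin_mult_le:
  assumes "0 < y" "y \<le> 1" "0 \<le> c"
  shows "real_of_int \<lfloor>c / arcsin y\<rfloor> * y \<le> c"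
proof -
  have "real_of_int \<lfloor>c / arcsin y\<rfloor> \<le> c / y"
    using le_arcsin[of y] assms by (smt (verit) divide_left_mono mult_pos_pos of_int_floor_le)
  then show ?thesis
    using assms by (simp add: field_simps)
qed

lemma tendsto_div_arcsin_at_right: "((\<lambda>y. y / arcsin y) \<longlongrightarrow> 1) (at_right 0)"
proof -
  have "DERIV arcsin 0 :> 1"
    using DERIV_arcsin[of 0] by simp
  then have "((\<lambda>y. arcsin y / y) \<longlongrightarrow> 1) (at 0)"
    by (simp add: DERIV_def)
  then have "((\<lambda>y. inverse (arcsin y / y)) \<longlongrightarrow> inverse 1) (at 0)"
    by (intro tendsto_inverse) auto
  then show ?thesis
    by (simp add: filterlim_at_split)
qed

lemma tendsto_sin_div_at_right: "((\<lambda>t::real. sin t / t) \<longlongrightarrow> 1) (at_right 0)"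
proof -
  have "DERIV sin 0 :> 1"
    using DERIV_sin[of 0] by simp
  then have "((\<lambda>t::real. sin t / t) \<longlongrightarrow> 1) (at 0)"
    by (simp add: DERIV_def)
  then show ?thesis
    by (simp add: filterlim_at_split)
qed

lemma tendsto_mult_floor_div_arcsin:
  fixes f g :: "'a \<Rightarrow> real"
  assumes f: "(f \<longlongrightarrow> 0) F" "\<forall>\<^sub>F z in F. 0 < f z" and g: "(g \<longlongrightarrow> a) F" "0 < a"
  shows "((\<lambda>z. f z * real_of_int \<lfloor>c / arcsin (f z * g z)\<rfloor>) \<longlongrightarrow> c / a) F"
proof -
  define y where "y z = f z * g z" for z
  have g_pos: "\<forall>\<^sub>F z in F. 0 < g z"
    using order_tendstoD(1)[OF g] by simp
  have "filterlim y (at_right 0) F"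
    unfolding filterlim_at y_def
    using f g_pos tendsto_mult[OF f(1) g(1)] by (auto elim: eventually_mono eventually_elim2)
  then have "((\<lambda>z. y z / arcsin (y z)) \<longlongrightarrow> 1) F"
    by (rule filterlim_compose[OF tendsto_div_arcsin_at_right])
  then have upper: "((\<lambda>z. c / g z * (y z / arcsin (y z))) \<longlongrightarrow> c / a) F"
    using tendsto_mult[OF tendsto_divide[OF tendsto_const g(1)]] g(2) by fastforce
  have lower: "((\<lambda>z. c / g z * (y z / arcsin (y z)) - f z) \<longlongrightarrow> c / a) F"
    using tendsto_diff[OF upper f(1)] by simp
  have "\<forall>\<^sub>F z in F. c / g z * (y z / arcsin (y z)) - f z \<le> f z * real_of_int \<lfloor>c / arcsin (y z)\<rfloor>
      \<and> f z * real_of_int \<lfloor>c / arcsin (y z)\<rfloor> \<le> c / g z * (y z / arcsin (y z))"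
    using f(2) g_pos
  proof eventually_elim
    case (elim z)
    have eq: "c / g z * (y z / arcsin (y z)) = f z * (c / arcsin (y z))"
      using elim by (simp add: y_def)
    have "c / arcsin (y z) - 1 \<le> real_of_int \<lfloor>c / arcsin (y z)\<rfloor>"
         "real_of_int \<lfloor>c / arcsin (y z)\<rfloor> \<le> c / arcsin (y z)"
      by linarith+
    then have "f z * (c / arcsin (y z) - 1) \<le> f z * real_of_int \<lfloor>c / arcsin (y z)\<rfloor>"
        "f z * real_of_int \<lfloor>c / arcsin (y z)\<rfloor> \<le> f z * (c / arcsin (y z))"
      using elim(1) by (intro mult_left_mono; simp)+
    then show ?case
      unfolding eq by (simp only: right_diff_distrib mult_1_right)
  qed
  then show ?thesis
    unfolding y_def[symmetric]
    by (intro tendsto_sandwich[OF _ _ lower upper]) (auto elim: eventually_mono)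
qed

definition torus_m :: "real \<Rightarrow> int" where
  "torus_m x = \<lfloor>pi / arcsin x\<rfloor>"

definition torus_ratio :: "real \<Rightarrow> real" where
  "torus_ratio x = sin (pi / (2 * real_of_int (torus_m x))) / x"

definition torus_n :: "real \<Rightarrow> real \<Rightarrow> int" where
  "torus_n x v = max (2 * (min \<lfloor>pi / arcsin (v * sqrt (1 - (torus_ratio x)\<^sup>2))\<rfloor> \<lfloor>2 * pi / arcsin v\<rfloor> div 2)) 1"

lemma tendsto_torus_m: "((\<lambda>x. x * real_of_int (torus_m x)) \<longlongrightarrow> pi) (at_right 0)"
  using tendsto_mult_floor_div_arcsin[of "\<lambda>x. x" "at_right 0" "\<lambda>_. 1" 1 pi]
  by (simp add: torus_m_def eventually_at_right_less)

lemma tendsto_torus_ratio: "(torus_ratio \<longlongrightarrow> 1 / 2) (at_right 0)"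
proof -
  define t where "t x = pi / (2 * real_of_int (torus_m x))" for x
  have xm_pos: "\<forall>\<^sub>F x in at_right 0. 0 < x * real_of_int (torus_m x)"
    using order_tendstoD(1)[OF tendsto_torus_m pi_gt_zero] .
  have "((\<lambda>x. pi / 2 * x / (x * real_of_int (torus_m x))) \<longlongrightarrow> pi / 2 * 0 / pi) (at_right 0)"
    by (intro tendsto_intros tendsto_torus_m) auto
  moreover have "\<forall>\<^sub>F x in at_right 0. pi / 2 * x / (x * real_of_int (torus_m x)) = t x"
    using xm_pos by eventually_elim (auto simp: t_def)
  ultimately have "(t \<longlongrightarrow> 0) (at_right 0)"
    by (simp add: tendsto_cong)
  moreover have "\<forall>\<^sub>F x in at_right 0. 0 < t x"
    using xm_pos eventually_at_right_less
    by eventually_elim (auto simp: t_def zero_less_mult_iff)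
  ultimately have "filterlim t (at_right 0) (at_right 0)"
    by (auto simp: filterlim_at elim: eventually_mono)
  then have sinc: "((\<lambda>x. sin (t x) / t x) \<longlongrightarrow> 1) (at_right 0)"
    by (rule filterlim_compose[OF tendsto_sin_div_at_right])
  have "((\<lambda>x. sin (t x) / t x * (pi / (2 * (x * real_of_int (torus_m x))))) \<longlongrightarrow> 1 * (pi / (2 * pi))) (at_right 0)"
    by (intro tendsto_intros sinc tendsto_torus_m) auto
  moreover have "\<forall>\<^sub>F x in at_right 0. sin (t x) / t x * (pi / (2 * (x * real_of_int (torus_m x)))) = torus_ratio x"
    using xm_pos eventually_at_right_less
    by eventually_elim (auto simp: t_def torus_ratio_def field_simps)
  ultimately show ?thesis
    by (simp add: tendsto_cong)
qed

lemma tendsto_mult_max_even_part: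
  fixes f :: "'a \<Rightarrow> real"
  assumes f: "(f \<longlongrightarrow> 0) F" "\<forall>\<^sub>F z in F. 0 < f z"
    and k: "((\<lambda>z. f z * real_of_int (k z)) \<longlongrightarrow> L) F" and "0 \<le> L"
  shows "((\<lambda>z. f z * real_of_int (max (2 * (k z div 2)) 1)) \<longlongrightarrow> L) F"
proof (rule tendsto_sandwich)
  show "((\<lambda>z. f z * real_of_int (k z) - f z) \<longlongrightarrow> L) F"
    using tendsto_diff[OF k f(1)] by simp
  show "((\<lambda>z. max (f z * real_of_int (k z)) (f z)) \<longlongrightarrow> L) F"
    using tendsto_max[OF k f(1)] \<open>0 \<le> L\<close> by (simp add: max_absorb1)
  have lower: "f z * real_of_int (k z) - f z \<le> f z * real_of_int (max (2 * (k z div 2)) 1)"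
    and upper: "f z * real_of_int (max (2 * (k z div 2)) 1) \<le> max (f z * real_of_int (k z)) (f z)"
    if "0 < f z" for z
  proof -
    have "k z - 1 \<le> max (2 * (k z div 2)) 1" "max (2 * (k z div 2)) 1 \<le> max (k z) 1"
      by presburger+
    then have "f z * (real_of_int (k z) - 1) \<le> f z * real_of_int (max (2 * (k z div 2)) 1)"
      "f z * real_of_int (max (2 * (k z div 2)) 1) \<le> f z * real_of_int (max (k z) 1)"
      using that by (intro mult_left_mono; simp)+
    then show "f z * real_of_int (k z) - f z \<le> f z * real_of_int (max (2 * (k z div 2)) 1)"
      "f z * real_of_int (max (2 * (k z div 2)) 1) \<le> max (f z * real_of_int (k z)) (f z)"
      using that by (simp_all add: right_diff_distrib max_def split: if_splits)
  qed
  show "\<forall>\<^sub>F z in F. f z * real_of_int (k z) - f z \<le> f z * real_of_int (max (2 * (k z div 2)) 1)"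
    "\<forall>\<^sub>F z in F. f z * real_of_int (max (2 * (k z div 2)) 1) \<le> max (f z * real_of_int (k z)) (f z)"
    using f(2) by (auto elim: eventually_mono intro: lower upper)
qed

lemma tendsto_torus_n:
  "((\<lambda>(x, v). v * real_of_int (torus_n x v)) \<longlongrightarrow> 2 * pi / sqrt 3) (at_right 0 \<times>\<^sub>F at_right 0)"
proof -
  let ?F = "at_right (0::real) \<times>\<^sub>F at_right (0::real)"
  define n1 where "n1 p = \<lfloor>pi / arcsin (snd p * sqrt (1 - (torus_ratio (fst p))\<^sup>2))\<rfloor>" for p :: "real \<times> real"
  define n2 where "n2 p = \<lfloor>2 * pi / arcsin (snd p * 1)\<rfloor>" for p :: "real \<times> real"
  have "filterlim snd (at_right 0) ?F"
    by (rule filterlim_snd)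
  then have v: "(snd \<longlongrightarrow> 0) ?F" "\<forall>\<^sub>F p in ?F. 0 < snd p"
    by (auto simp: filterlim_at elim: eventually_mono)
  have "((\<lambda>p. torus_ratio (fst p)) \<longlongrightarrow> 1 / 2) ?F"
    by (rule filterlim_compose[OF tendsto_torus_ratio filterlim_fst])
  then have "((\<lambda>p. sqrt (1 - (torus_ratio (fst p))\<^sup>2)) \<longlongrightarrow> sqrt (1 - (1 / 2)\<^sup>2)) ?F"
    by (intro tendsto_intros)
  moreover have "sqrt (1 - (1 / 2)\<^sup>2) = sqrt 3 / (2::real)"
    by (simp add: power2_eq_square real_sqrt_divide)
  ultimately have "((\<lambda>p. snd p * real_of_int (n1 p)) \<longlongrightarrow> pi / (sqrt 3 / 2)) ?F"
    unfolding n1_def by (intro tendsto_mult_floor_div_arcsin v) auto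
  moreover have "((\<lambda>p. snd p * real_of_int (n2 p)) \<longlongrightarrow> 2 * pi / 1) ?F"
    unfolding n2_def by (intro tendsto_mult_floor_div_arcsin v) auto
  ultimately have "((\<lambda>p. min (snd p * real_of_int (n1 p)) (snd p * real_of_int (n2 p)))
      \<longlongrightarrow> min (pi / (sqrt 3 / 2)) (2 * pi / 1)) ?F"
    by (rule tendsto_min)
  moreover have "min (pi / (sqrt 3 / 2)) (2 * pi / 1) = 2 * pi / sqrt 3"
    by (simp add: min_def field_simps)
  moreover have "\<forall>\<^sub>F p in ?F. min (snd p * real_of_int (n1 p)) (snd p * real_of_int (n2 p))
      = snd p * real_of_int (min (n1 p) (n2 p))"
    using v(2) by eventually_elim (simp add: min_def)
  ultimately have "((\<lambda>p. snd p * real_of_int (min (n1 p) (n2 p))) \<longlongrightarrow> 2 * pi / sqrt 3) ?F"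
    by (simp add: tendsto_cong)
  then show ?thesis
    using tendsto_mult_max_even_part[OF v] unfolding case_prod_beta'
    by (simp add: torus_n_def n1_def n2_def)
qed

lemma schf_m_eq_torus_m:
  assumes "0 < cos \<eta>" "d \<le> 2 * cos \<eta>"
  shows "schf_m d \<eta> = torus_m (d / (2 * cos \<eta>))"
  using assms by (simp add: schf_m_def torus_m_def)

lemma schf_n_eq_torus_n:
  assumes d: "0 < d" and cs: "0 < cos \<eta>" "0 < sin \<eta>" and le: "d \<le> 2 * cos \<eta>" "d \<le> 2 * sin \<eta>"
  shows "schf_n d \<eta> = torus_n (d / (2 * cos \<eta>)) (d / (2 * sin \<eta>))"
proof -
  define x where "x = d / (2 * cos \<eta>)"
  define v where "v = d / (2 * sin \<eta>)"
  have "(d\<^sup>2 / 4) * (1 / sin \<eta>)\<^sup>2 - (cos \<eta> / sin \<eta>)\<^sup>2 * (sin (pi / (2 * real_of_int (torus_m x))))\<^sup>2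
      = v\<^sup>2 * (1 - (torus_ratio x)\<^sup>2)"
    using d cs by (simp add: v_def x_def torus_ratio_def field_simps power2_eq_square)
  moreover have "sqrt (v\<^sup>2 * (1 - (torus_ratio x)\<^sup>2)) = v * sqrt (1 - (torus_ratio x)\<^sup>2)"
    using d cs by (simp add: real_sqrt_mult v_def)
  ultimately have "schf_n1 d \<eta> = \<lfloor>pi / arcsin (v * sqrt (1 - (torus_ratio x)\<^sup>2))\<rfloor>"
    using schf_m_eq_torus_m[OF cs(1) le(1)] by (simp add: schf_n1_def x_def)
  moreover have "schf_n2 d \<eta> = \<lfloor>2 * pi / arcsin v\<rfloor>"
    using le by (simp add: schf_n2_def v_def)
  ultimately show ?thesis
    by (simp add: schf_n_def torus_n_def x_def v_def)
qed

lemma schf_m_mult_le: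
  assumes "0 < d" "0 \<le> cos \<eta>"
  shows "0 \<le> schf_m d \<eta>" "real_of_int (schf_m d \<eta>) * d \<le> 2 * pi * cos \<eta> + d"
proof -
  show "0 \<le> schf_m d \<eta>"
    using assms by (simp add: schf_m_def arcsin_nonneg)
  show "real_of_int (schf_m d \<eta>) * d \<le> 2 * pi * cos \<eta> + d"
  proof (cases "d \<le> 2 * cos \<eta>")
    case True
    then have "real_of_int (schf_m d \<eta>) * (d / (2 * cos \<eta>)) \<le> pi"
      using assms floor_div_arcsin_mult_le[of "d / (2 * cos \<eta>)" pi] by (simp add: schf_m_def)
    then show ?thesis
      using True assms by (simp add: field_simps)
  qed (use assms in \<open>simp add: schf_m_def\<close>)
qed

lemma schf_n_mult_le:
  assumes "0 < d" "0 < sin \<eta>"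
  shows "1 \<le> schf_n d \<eta>" "real_of_int (schf_n d \<eta>) * d \<le> 4 * pi + d"
proof -
  show "1 \<le> schf_n d \<eta>"
    by (simp add: schf_n_def)
  have "real_of_int (max (schf_n2 d \<eta>) 1) * d \<le> 4 * pi + d"
  proof (cases "d \<le> 2 * sin \<eta>")
    case True
    then have "real_of_int (schf_n2 d \<eta>) * (d / (2 * sin \<eta>)) \<le> 2 * pi"
      using assms floor_div_arcsin_mult_le[of "d / (2 * sin \<eta>)" "2 * pi"] by (simp add: schf_n2_def)
    then have "real_of_int (schf_n2 d \<eta>) * d \<le> 4 * pi * sin \<eta>"
      using assms by (simp add: field_simps)
    then have "real_of_int (schf_n2 d \<eta>) * d \<le> 4 * pi"
      using sin_le_one[of \<eta>] pi_gt_zero by (smt (verit) mult_left_le)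
    then show ?thesis
      using assms(1) pi_gt_zero by (auto simp: max_def)
  qed (use assms in \<open>simp add: schf_n2_def\<close>)
  moreover have "schf_n d \<eta> \<le> max (schf_n2 d \<eta>) 1"
    by (simp add: schf_n_def)
  ultimately show "real_of_int (schf_n d \<eta>) * d \<le> 4 * pi + d"
    using assms(1) by (smt (verit) mult_right_mono of_int_le_iff)
qed

definition torus_error :: "real \<Rightarrow> real \<Rightarrow> real" where
  "torus_error d \<eta> = real_of_int (schf_m d \<eta> * schf_n d \<eta>) * d\<^sup>2 - 8 * pi\<^sup>2 / sqrt 3 * (sin \<eta> * cos \<eta>)"

lemma sin_cos_quarter_bounds:
  assumes "\<eta> \<in> {pi / 4..pi / 2}"
  shows "1 / 2 \<le> sin \<eta>" "0 \<le> cos \<eta>" "sin \<eta> * cos \<eta> \<le> 1 / 2"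
proof -
  have "sin (pi / 6) \<le> sin \<eta>"
    using assms by (intro sin_monotone_2pi_le) auto
  then show "1 / 2 \<le> sin \<eta>"
    by (simp add: sin_30)
  show "0 \<le> cos \<eta>"
    using assms by (intro cos_ge_zero) auto
  show "sin \<eta> * cos \<eta> \<le> 1 / 2"
    using sin_le_one[of "2 * \<eta>"] by (simp add: sin_double)
qed

lemma abs_torus_error_le_thin:
  assumes "0 < d" "d \<le> 1" "\<eta> \<in> {pi / 4..pi / 2}" "cos \<eta> \<le> \<delta>" "d \<le> \<delta>"
  shows "\<bar>torus_error d \<eta>\<bar> \<le> ((2 * pi + 1) * (4 * pi + 1) + 8 * pi\<^sup>2 / sqrt 3) * \<delta>"
proof -
  note sc = sin_cos_quarter_bounds[OF assms(3)]
  define M N where "M = real_of_int (schf_m d \<eta>) * d" and "N = real_of_int (schf_n d \<eta>) * d"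
  have "2 * pi * cos \<eta> \<le> 2 * pi * \<delta>"
    by (rule mult_left_mono[OF assms(4)]) simp
  moreover have "(2 * pi + 1) * \<delta> = 2 * pi * \<delta> + \<delta>"
    by (simp add: distrib_right)
  ultimately have "M \<le> (2 * pi + 1) * \<delta>"
    using schf_m_mult_le(2)[OF assms(1) sc(2)] assms(5) unfolding M_def by linarith
  moreover have "N \<le> 4 * pi + 1"
    using schf_n_mult_le(2)[of d \<eta>] assms(1,2) sc(1) unfolding N_def by simp
  moreover have "0 \<le> M" "0 \<le> N"
    using schf_m_mult_le(1)[OF assms(1) sc(2)] schf_n_mult_le(1)[of d \<eta>] assms(1) sc(1)
    unfolding M_def N_def by simp_all
  ultimately have "0 \<le> M * N" "M * N \<le> (2 * pi + 1) * \<delta> * (4 * pi + 1)"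
    by (simp_all add: mult_mono)
  moreover have "real_of_int (schf_m d \<eta> * schf_n d \<eta>) * d\<^sup>2 = M * N"
    by (simp add: M_def N_def power2_eq_square)
  moreover have "0 \<le> sin \<eta> * cos \<eta>" "sin \<eta> * cos \<eta> \<le> \<delta>"
    using sc sin_le_one[of \<eta>] assms(4) mult_left_le_one_le[of "cos \<eta>" "sin \<eta>"] by simp_all
  then have "0 \<le> 8 * pi\<^sup>2 / sqrt 3 * (sin \<eta> * cos \<eta>)" "8 * pi\<^sup>2 / sqrt 3 * (sin \<eta> * cos \<eta>) \<le> 8 * pi\<^sup>2 / sqrt 3 * \<delta>"
    using mult_left_mono[of _ _ "8 * pi\<^sup>2 / sqrt 3"] by simp_all
  ultimately show ?thesis
    unfolding torus_error_def by (simp add: algebra_simps)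
qed

lemma abs_torus_error_le_torus_m_n:
  assumes "0 < d" "d \<le> 1" "\<eta> \<in> {pi / 4..pi / 2}" "d \<le> 2 * cos \<eta>"
  defines "x \<equiv> d / (2 * cos \<eta>)" and "v \<equiv> d / (2 * sin \<eta>)"
  shows "\<bar>torus_error d \<eta>\<bar>
    \<le> 2 * \<bar>x * real_of_int (torus_m x) * (v * real_of_int (torus_n x v)) - 2 * pi\<^sup>2 / sqrt 3\<bar>"
proof -
  note sc = sin_cos_quarter_bounds[OF assms(3)]
  have pos: "0 < cos \<eta>" "0 < sin \<eta>" "d \<le> 2 * sin \<eta>"
    using assms(1,2,4) sc(1) by linarith+
  have "torus_error d \<eta>
    = 4 * (sin \<eta> * cos \<eta>) * (x * real_of_int (torus_m x) * (v * real_of_int (torus_n x v)) - 2 * pi\<^sup>2 / sqrt 3)"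
    using assms(1,4) pos
    by (simp add: torus_error_def x_def v_def schf_m_eq_torus_m schf_n_eq_torus_n field_simps power2_eq_square)
  moreover have "4 * (sin \<eta> * cos \<eta>) \<le> 2"
    using sc(3) by linarith
  ultimately show ?thesis
    using pos by (simp add: abs_mult mult_right_mono)
qed

lemma torus_m_n_close:
  assumes "0 < e"
  obtains \<rho> where "0 < \<rho>" "\<rho> \<le> 1"
    "\<And>x v. 0 < x \<Longrightarrow> x < \<rho> \<Longrightarrow> 0 < v \<Longrightarrow> v < \<rho> \<Longrightarrow>
      \<bar>x * real_of_int (torus_m x) * (v * real_of_int (torus_n x v)) - 2 * pi\<^sup>2 / sqrt 3\<bar> < e"
proof -
  define P where "P x v = x * real_of_int (torus_m x) * (v * real_of_int (torus_n x v))" for x v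
  have L: "pi * (2 * pi / sqrt 3) = 2 * pi\<^sup>2 / sqrt 3"
    by (simp add: power2_eq_square)
  have "((\<lambda>p. P (fst p) (snd p)) \<longlongrightarrow> 2 * pi\<^sup>2 / sqrt 3) (at_right 0 \<times>\<^sub>F at_right 0)"
    using tendsto_mult[OF filterlim_compose[OF tendsto_torus_m filterlim_fst] tendsto_torus_n]
    unfolding L P_def by (simp only: case_prod_beta)
  then have "\<forall>\<^sub>F p in at_right 0 \<times>\<^sub>F at_right 0. dist (P (fst p) (snd p)) (2 * pi\<^sup>2 / sqrt 3) < e"
    using assms by (rule tendstoD)
  then obtain Px Pv where "\<forall>\<^sub>F x in at_right 0. Px x" "\<forall>\<^sub>F v in at_right 0. Pv v"
    and PxPv: "\<And>x v. Px x \<Longrightarrow> Pv v \<Longrightarrow> \<bar>P x v - 2 * pi\<^sup>2 / sqrt 3\<bar> < e"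
    unfolding eventually_prod_filter dist_real_def by auto
  then obtain \<rho>x \<rho>v where "0 < \<rho>x" "0 < \<rho>v"
    and "\<And>x. 0 < x \<Longrightarrow> x < \<rho>x \<Longrightarrow> Px x" "\<And>v. 0 < v \<Longrightarrow> v < \<rho>v \<Longrightarrow> Pv v"
    unfolding eventually_at_right_field by metis
  then show ?thesis
    using PxPv by (intro that[of "min 1 (min \<rho>x \<rho>v)"]) (auto simp: P_def)
qed

lemma uniform_limit_torus_error: "uniform_limit {pi / 4..pi / 2} torus_error (\<lambda>_. 0) (at_right 0)"
  unfolding uniform_limit_iff dist_real_def
proof (intro allI impI)
  fix \<epsilon> :: real
  assume "0 < \<epsilon>"
  then have "0 < \<epsilon> / 2"
    by simp
  then obtain \<rho> where \<rho>: "0 < \<rho>" "\<rho> \<le> 1"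
    and close: "\<And>x v. 0 < x \<Longrightarrow> x < \<rho> \<Longrightarrow> 0 < v \<Longrightarrow> v < \<rho> \<Longrightarrow>
      \<bar>x * real_of_int (torus_m x) * (v * real_of_int (torus_n x v)) - 2 * pi\<^sup>2 / sqrt 3\<bar> < \<epsilon> / 2"
    by (rule torus_m_n_close) (rule that)
  define C where "C = (2 * pi + 1) * (4 * pi + 1) + 8 * pi\<^sup>2 / sqrt 3"
  have "0 < C"
    unfolding C_def by (intro add_pos_pos mult_pos_pos) auto
  define \<delta> where "\<delta> = \<epsilon> / (2 * C)"
  have \<delta>: "0 < \<delta>" "C * \<delta> < \<epsilon>"
    using \<open>0 < C\<close> \<open>0 < \<epsilon>\<close> by (simp_all add: \<delta>_def)
  have "\<forall>\<^sub>F d in at_right 0. 0 < d \<and> d < \<rho> \<and> d < \<delta> \<and> d < 2 * \<delta> * \<rho>"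
    using \<delta> \<rho> by (intro eventually_at_rightI[of 0 "min \<rho> (min \<delta> (2 * \<delta> * \<rho>))"]) auto
  then show "\<forall>\<^sub>F d in at_right 0. \<forall>\<eta>\<in>{pi / 4..pi / 2}. \<bar>torus_error d \<eta> - 0\<bar> < \<epsilon>"
  proof (eventually_elim, intro ballI)
    fix d \<eta> :: real
    assume d: "0 < d \<and> d < \<rho> \<and> d < \<delta> \<and> d < 2 * \<delta> * \<rho>" and \<eta>: "\<eta> \<in> {pi / 4..pi / 2}"
    note sc = sin_cos_quarter_bounds[OF \<eta>]
    show "\<bar>torus_error d \<eta> - 0\<bar> < \<epsilon>"
    proof (cases "cos \<eta> \<le> \<delta>")
      case True
      then show ?thesis
        using abs_torus_error_le_thin[of d \<eta> \<delta>] d \<eta> \<rho> \<delta> by (simp add: C_def)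
    next
      case False
      define x v where "x = d / (2 * cos \<eta>)" and "v = d / (2 * sin \<eta>)"
      have "2 * \<delta> * \<rho> < 2 * cos \<eta> * \<rho>"
        using False \<rho> by simp
      then have "d < 2 * cos \<eta> * \<rho>"
        using d by linarith
      then have "0 < x" "x < \<rho>"
        using False \<delta> d by (simp_all add: x_def field_simps)
      moreover have "0 < v" "v \<le> d"
        using sc d by (simp_all add: v_def field_simps)
      moreover have "d \<le> 2 * cos \<eta>"
        using \<open>d < 2 * cos \<eta> * \<rho>\<close> \<rho> False \<delta> by (smt (verit) mult_left_le)
      ultimately show ?thesis
        using abs_torus_error_le_torus_m_n[of d \<eta>] close[of x v] d \<eta> \<rho>
        unfolding x_def v_def by simp
    qed
  qed
qed

definition eta_step :: "real \<Rightarrow> real" where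
  "eta_step d = 2 * arcsin (d / 2)"

definition schf_half_t :: "real \<Rightarrow> nat" where
  "schf_half_t d = nat (schf_t d div 2)"

lemma eta_step_bounds:
  assumes "0 < d" "d \<le> 2"
  shows "d \<le> eta_step d" "eta_step d \<le> pi" "sin (eta_step d) = d * sqrt (1 - d\<^sup>2 / 4)"
proof -
  show "d \<le> eta_step d"
    using le_arcsin[of "d / 2"] assms by (simp add: eta_step_def)
  show "eta_step d \<le> pi"
    using arcsin_ubound[of "d / 2"] assms by (simp add: eta_step_def)
  show "sin (eta_step d) = d * sqrt (1 - d\<^sup>2 / 4)"
    using assms by (simp add: eta_step_def sin_double cos_arcsin power_divide)
qed

lemma schf_half_t_bounds:
  assumes "0 < d" "d \<le> 2"
  defines "K \<equiv> real (schf_half_t d)" and "\<Delta> \<equiv> eta_step d"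
  shows "2 * K * \<Delta> \<le> pi / 2" "pi / 2 - \<Delta> \<le> (2 * K + 1) * \<Delta>" "(2 * K + 1) * \<Delta> \<le> pi / 2 + \<Delta>"
proof -
  have "0 < \<Delta>"
    using eta_step_bounds(1)[OF assms(1,2)] assms(1) unfolding \<Delta>_def by linarith
  have t: "schf_t d = \<lfloor>pi / (2 * \<Delta>)\<rfloor>"
    by (simp add: schf_t_def \<Delta>_def eta_step_def)
  then have "0 \<le> schf_t d"
    using \<open>0 < \<Delta>\<close> by simp
  then have "2 * K \<le> real_of_int (schf_t d)" "real_of_int (schf_t d) \<le> 2 * K + 1"
    unfolding K_def schf_half_t_def by linarith+
  then have "2 * K * \<Delta> \<le> real_of_int (schf_t d) * \<Delta>" "real_of_int (schf_t d) * \<Delta> \<le> (2 * K + 1) * \<Delta>"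
    using \<open>0 < \<Delta>\<close> by (simp_all add: mult_right_mono)
  moreover have "real_of_int (schf_t d) * \<Delta> \<le> pi / 2" "pi / 2 < real_of_int (schf_t d) * \<Delta> + \<Delta>"
    using t \<open>0 < \<Delta>\<close> floor_divide_lower[of "2 * \<Delta>" pi] floor_divide_upper[of "2 * \<Delta>" pi]
    by (auto simp: field_simps)
  moreover have "(2 * K + 1) * \<Delta> = 2 * K * \<Delta> + \<Delta>"
    by (simp add: algebra_simps)
  ultimately show "2 * K * \<Delta> \<le> pi / 2" "pi / 2 - \<Delta> \<le> (2 * K + 1) * \<Delta>" "(2 * K + 1) * \<Delta> \<le> pi / 2 + \<Delta>"
    by linarith+
qed

lemma schf_eta_range:
  assumes "0 < d" "d \<le> 2" "i \<le> schf_half_t d"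
  shows "schf_eta d i \<in> {pi / 4..pi / 2}"
proof -
  have "0 \<le> eta_step d"
    using eta_step_bounds(1)[OF assms(1,2)] assms(1) by linarith
  then have "2 * real i * eta_step d \<le> 2 * real (schf_half_t d) * eta_step d"
    using assms(3) by (simp add: mult_right_mono)
  then show ?thesis
    using schf_half_t_bounds(1)[OF assms(1,2)] \<open>0 \<le> eta_step d\<close>
    by (simp add: schf_eta_def eta_step_def)
qed

lemma sin_mult_dirichlet_sum:
  fixes x :: real
  shows "sin x * (1 + 2 * (\<Sum>i=1..K. cos (2 * real i * x))) = sin ((2 * real K + 1) * x)"
proof (induction K)
  case (Suc K)
  have "sin x * (1 + 2 * (\<Sum>i=1..Suc K. cos (2 * real i * x)))
      = sin ((2 * real K + 2) * x - x) + 2 * sin x * cos ((2 * real K + 2) * x)"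
    using Suc by (simp add: algebra_simps)
  also have "\<dots> = sin ((2 * real K + 2) * x + x)"
    by (simp add: sin_add sin_diff)
  finally show ?case
    by (simp add: algebra_simps)
qed simp

lemma sin_cos_schf_eta: "sin (schf_eta d i) * cos (schf_eta d i) = cos (2 * real i * eta_step d) / 2"
proof -
  have "2 * schf_eta d i = pi / 2 + 2 * real i * eta_step d"
    by (simp add: schf_eta_def eta_step_def algebra_simps)
  then have "sin (2 * schf_eta d i) = cos (2 * real i * eta_step d)"
    by (simp add: sin_add)
  then show ?thesis
    by (simp add: sin_double)
qed

lemma schf_M4_decomposition:
  assumes "0 < d" "d < 2"
  defines "K \<equiv> schf_half_t d" and "\<Delta> \<equiv> eta_step d"
  shows "real_of_int (schf_M4 d) * d ^ 3
    = 4 * pi\<^sup>2 / sqrt 3 * (d * sin ((2 * real K + 1) * \<Delta>) / sin \<Delta>)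
      + d * (torus_error d (schf_eta d 0) + 2 * (\<Sum>i=1..K. torus_error d (schf_eta d i)))"
proof -
  define T where "T i = real_of_int (schf_m d (schf_eta d i) * schf_n d (schf_eta d i)) * d\<^sup>2" for i
  define c where "c i = cos (2 * real i * \<Delta>)" for i
  have T: "T i = 4 * pi\<^sup>2 / sqrt 3 * c i + torus_error d (schf_eta d i)" for i
    by (simp add: T_def c_def torus_error_def sin_cos_schf_eta \<Delta>_def)
  have "real_of_int (schf_M4 d) * d ^ 3 = d * (T 0 + 2 * (\<Sum>i=1..K. T i))"
    by (simp add: schf_M4_def T_def K_def schf_half_t_def sum_distrib_left algebra_simps power2_eq_square power3_eq_cube)
  also have "\<dots> = 4 * pi\<^sup>2 / sqrt 3 * (d * (1 + 2 * (\<Sum>i=1..K. c i)))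
      + d * (torus_error d (schf_eta d 0) + 2 * (\<Sum>i=1..K. torus_error d (schf_eta d i)))"
    by (simp add: T sum.distrib sum_distrib_left c_def algebra_simps)
  also have "1 + 2 * (\<Sum>i=1..K. c i) = sin ((2 * real K + 1) * \<Delta>) / sin \<Delta>"
  proof -
    have "d\<^sup>2 < 2\<^sup>2"
      using assms by (intro power_strict_mono) auto
    then have "0 < sin \<Delta>"
      using eta_step_bounds(3)[of d] assms by (simp add: \<Delta>_def)
    then show ?thesis
      using sin_mult_dirichlet_sum[of \<Delta> K] by (simp add: c_def field_simps)
  qed
  finally show ?thesis
    by simp
qed

lemma tendsto_eta_step: "(eta_step \<longlongrightarrow> 0) (at_right 0)"
proof -
  have "((\<lambda>d::real. d / 2) \<longlongrightarrow> 0) (at_right 0)"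
    by (intro tendsto_eq_intros) auto
  then have "((\<lambda>d. 2 * arcsin (d / 2)) \<longlongrightarrow> 2 * arcsin 0) (at_right 0)"
    by (intro tendsto_mult_left isCont_tendsto_compose[OF isCont_arcsin]) auto
  then show ?thesis
    by (simp add: eta_step_def[abs_def])
qed

lemma tendsto_dirichlet_factor:
  "((\<lambda>d. d * sin ((2 * real (schf_half_t d) + 1) * eta_step d) / sin (eta_step d)) \<longlongrightarrow> 1) (at_right 0)"
proof -
  have small: "\<forall>\<^sub>F d in at_right (0::real). 0 < d \<and> d < 1"
    by (intro eventually_at_rightI[of 0 "1::real"]) auto
  have "((\<lambda>d. (2 * real (schf_half_t d) + 1) * eta_step d) \<longlongrightarrow> pi / 2) (at_right 0)"
  proof (rule tendsto_sandwich)
    show "\<forall>\<^sub>F d in at_right 0. pi / 2 - eta_step d \<le> (2 * real (schf_half_t d) + 1) * eta_step d"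
      "\<forall>\<^sub>F d in at_right 0. (2 * real (schf_half_t d) + 1) * eta_step d \<le> pi / 2 + eta_step d"
      using small by (auto elim!: eventually_mono intro: schf_half_t_bounds)
    show "((\<lambda>d. pi / 2 - eta_step d) \<longlongrightarrow> pi / 2) (at_right 0)"
      "((\<lambda>d. pi / 2 + eta_step d) \<longlongrightarrow> pi / 2) (at_right 0)"
      using tendsto_diff[OF tendsto_const tendsto_eta_step] tendsto_add[OF tendsto_const tendsto_eta_step]
      by simp_all
  qed
  then have "((\<lambda>d. sin ((2 * real (schf_half_t d) + 1) * eta_step d) / sqrt (1 - d\<^sup>2 / 4))
      \<longlongrightarrow> sin (pi / 2) / sqrt (1 - 0\<^sup>2 / 4)) (at_right 0)"
    by (intro tendsto_intros) auto
  moreover have "\<forall>\<^sub>F d in at_right 0. sin ((2 * real (schf_half_t d) + 1) * eta_step d) / sqrt (1 - d\<^sup>2 / 4)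
      = d * sin ((2 * real (schf_half_t d) + 1) * eta_step d) / sin (eta_step d)"
    using small
  proof eventually_elim
    case (elim d)
    then have "d\<^sup>2 < 1"
      by (simp add: power_less_one_iff abs_less_iff)
    then show ?case
      using elim eta_step_bounds(3)[of d] by simp
  qed
  ultimately show ?thesis
    by (simp add: tendsto_cong)
qed

lemma tendsto_torus_error_sum:
  "((\<lambda>d. d * (torus_error d (schf_eta d 0) + 2 * (\<Sum>i=1..schf_half_t d. torus_error d (schf_eta d i))))
    \<longlongrightarrow> 0) (at_right 0)"
proof (rule tendstoI)
  fix \<epsilon> :: real
  assume "0 < \<epsilon>"
  then have "\<forall>\<^sub>F d in at_right 0. \<forall>\<eta>\<in>{pi / 4..pi / 2}. \<bar>torus_error d \<eta>\<bar> < \<epsilon> / 6"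
    using uniform_limit_torus_error[unfolded uniform_limit_iff, rule_format, of "\<epsilon> / 6"]
    by (simp add: dist_real_def)
  moreover have "\<forall>\<^sub>F d in at_right (0::real). 0 < d \<and> d < 1"
    by (intro eventually_at_rightI[of 0 "1::real"]) auto
  ultimately show "\<forall>\<^sub>F d in at_right 0.
      dist (d * (torus_error d (schf_eta d 0) + 2 * (\<Sum>i=1..schf_half_t d. torus_error d (schf_eta d i)))) 0 < \<epsilon>"
  proof eventually_elim
    case (elim d)
    define K where "K = schf_half_t d"
    have err: "\<bar>torus_error d (schf_eta d i)\<bar> < \<epsilon> / 6" if "i \<le> K" for i
      using elim schf_eta_range[of d i] that by (simp add: K_def)
    have "\<bar>\<Sum>i=1..K. torus_error d (schf_eta d i)\<bar> \<le> (\<Sum>i=1..K. \<bar>torus_error d (schf_eta d i)\<bar>)"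
      by (rule sum_abs)
    also have "\<dots> \<le> real K * (\<epsilon> / 6)"
      using sum_bounded_above[of "{1..K}" "\<lambda>i. \<bar>torus_error d (schf_eta d i)\<bar>" "\<epsilon> / 6"] err
      by (simp add: less_imp_le)
    finally have "\<bar>torus_error d (schf_eta d 0) + 2 * (\<Sum>i=1..K. torus_error d (schf_eta d i))\<bar>
        \<le> \<epsilon> / 6 + 2 * (real K * (\<epsilon> / 6))"
      using err[of 0] by linarith
    also have "\<dots> = (2 * real K + 1) * (\<epsilon> / 6)"
      by (simp add: algebra_simps)
    finally have sum_le: "\<bar>torus_error d (schf_eta d 0) + 2 * (\<Sum>i=1..K. torus_error d (schf_eta d i))\<bar>
        \<le> (2 * real K + 1) * (\<epsilon> / 6)" .
    have "(2 * real K + 1) * d \<le> (2 * real K + 1) * eta_step d"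
      using eta_step_bounds(1)[of d] elim by (intro mult_left_mono) auto
    also have "\<dots> \<le> pi / 2 + eta_step d"
      using schf_half_t_bounds(3)[of d] elim by (simp add: K_def)
    also have "\<dots> < 6"
      using eta_step_bounds(2)[of d] elim pi_less_4 by linarith
    finally have "(2 * real K + 1) * d * (\<epsilon> / 6) < 6 * (\<epsilon> / 6)"
      using \<open>0 < \<epsilon>\<close> by (intro mult_strict_right_mono) auto
    moreover have "\<bar>d * (torus_error d (schf_eta d 0) + 2 * (\<Sum>i=1..K. torus_error d (schf_eta d i)))\<bar>
        \<le> d * ((2 * real K + 1) * (\<epsilon> / 6))"
      using sum_le elim by (simp add: abs_mult mult_left_mono)
    ultimately show ?case
      by (simp add: dist_real_def K_def[symmetric] mult_ac)
  qed
qed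

lemma sphere_area_4: "sphere_area 4 = 2 * pi\<^sup>2"
proof -
  have "Gamma (1 + real 4 / 2) = 2"
    using Gamma_fact[of 2] by (simp add: numeral_eq_Suc)
  then show ?thesis
    by (simp add: sphere_area_def powr_numeral)
qed

theorem lemma1:
  shows "((\<lambda>d. real_of_int (schf_M4 d) / sphere_area 4 * (d / 2) ^ 3)
          \<longlongrightarrow> 1 / (4 * sqrt 3)) (at_right 0)"
proof -
  define D where "D d = d * sin ((2 * real (schf_half_t d) + 1) * eta_step d) / sin (eta_step d)" for d
  define E where "E d = d * (torus_error d (schf_eta d 0) + 2 * (\<Sum>i=1..schf_half_t d. torus_error d (schf_eta d i)))" for d
  have "((\<lambda>d. (4 * pi\<^sup>2 / sqrt 3 * D d + E d) / (16 * pi\<^sup>2)) \<longlongrightarrow> (4 * pi\<^sup>2 / sqrt 3 * 1 + 0) / (16 * pi\<^sup>2)) (at_right 0)"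
    unfolding D_def E_def by (intro tendsto_intros tendsto_dirichlet_factor tendsto_torus_error_sum) auto
  moreover have "(4 * pi\<^sup>2 / sqrt 3 * 1 + 0) / (16 * pi\<^sup>2) = 1 / (4 * sqrt 3)"
    by (simp add: field_simps)
  moreover have "\<forall>\<^sub>F d in at_right 0. (4 * pi\<^sup>2 / sqrt 3 * D d + E d) / (16 * pi\<^sup>2)
      = real_of_int (schf_M4 d) / sphere_area 4 * (d / 2) ^ 3"
    by (intro eventually_at_rightI[of 0 "2::real"])
      (simp_all add: schf_M4_decomposition D_def E_def sphere_area_4 power_divide field_simps)
  ultimately show ?thesis
    by (simp add: tendsto_cong)
qed

end
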